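(* Let $n\in\mathbb{N}$ and suppose $n=\sum_{i=1}^{\ell}(-1)^{i-1}2^{\alpha_i}$ is an alternating binary representation of $n$. Then $\alpha_1=\lceil\log_2 n\rceil$ and, for each $i\in\{2,\dots,\ell\}$, \[ \alpha_i=\left\lceil \log_2\left((-1)^{i-1}\left(n-2^{\alpha_1}+2^{\alpha_2}-\cdots+(-1)^{i-1}2^{\alpha_{i-1}}\right)\right)\right\rceil . \] In particular, the alternating binary representation of $n$ is unique, and $(\alpha_2,\dots,\alpha_\ell)$ determines the alternating binary representation of $2^{\alpha_1}-n$.
   Context: An alternating binary representation (ABR) of $n\in\mathbb{N}$ is an expression $n=\sum_{i=1}^{\ell}(-1)^{i-1}2^{\alpha_i}$ with $\ell\ge 1$ and nonnegative integers $\alpha_1>\alpha_2>\cdots>\alpha_{\ell-1}>\alpha_\ell+1$; such $(\alpha_1,\dots,\alpha_\ell)$ is said to determine the ABR. *)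

theory Defs
  imports Complex_Main
begin

text \<open>A finite sequence (alpha_1,...,alpha_l) is stored as a list, alpha_i = as ! (i-1).
  Admissibility: l >= 1, alpha_1 > ... > alpha_(l-1) > alpha_l + 1.\<close>

definition abr_exponents :: "nat list \<Rightarrow> bool" where
  "abr_exponents as \<longleftrightarrow> length as \<ge> 1 \<and>
     (\<forall>i. 1 \<le> i \<and> i + 1 < length as \<longrightarrow> as ! (i - 1) > as ! i) \<and>
     (length as \<ge> 2 \<longrightarrow> as ! (length as - 2) > as ! (length as - 1) + 1)"

definition abr_value :: "nat list \<Rightarrow> int" where
  "abr_value as = (\<Sum>i\<in>{1..length as}. (-1) ^ (i - 1) * 2 ^ (as ! (i - 1)))"

definition determines_abr :: "nat list \<Rightarrow> nat \<Rightarrow> bool" where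
  "determines_abr as n \<longleftrightarrow> abr_exponents as \<and> int n = abr_value as"

end

theory Submission
  imports Defs
begin

text \<open>The gaps between the exponents make each tail of an ABR worth at most half of the
  power of two it is subtracted from, and the final gap of at least two makes this strict for
  tails of length at least two. Hence an ABR with leading exponent \<open>\<alpha>\<close> has a value \<open>v\<close> with
  \<open>2\<^sup>\<alpha> < 2v\<close> and \<open>v \<le> 2\<^sup>\<alpha>\<close>, i.e. \<open>\<alpha> = \<lceil>log\<^sub>2 v\<rceil>\<close>. Every tail of an ABR is again an ABR, whose value
  is the signed remainder of \<open>n\<close> after the preceding terms; this recovers each exponent from \<open>n\<close>,
  and uniqueness follows by induction on the length.\<close>

lemma abr_value_conv_sum_lessThan:
  "abr_value as = (\<Sum>i<length as. (-1) ^ i * 2 ^ (as ! i))"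
  unfolding abr_value_def by (simp add: sum.atLeast1_atMost_eq)

lemma abr_value_Nil [simp]: "abr_value [] = 0"
  by (simp add: abr_value_def)

lemma abr_value_Cons [simp]: "abr_value (a # as) = 2 ^ a - abr_value as"
  by (simp add: abr_value_conv_sum_lessThan sum.lessThan_Suc_shift sum_negf del: sum.lessThan_Suc)

lemma abr_value_append:
  "abr_value (xs @ ys) = abr_value xs + (-1) ^ length xs * abr_value ys"
  by (induction xs) (auto simp: algebra_simps)

lemma abr_value_take:
  "k \<le> length as \<Longrightarrow>
     abr_value (take k as) = (\<Sum>j\<in>{1..k}. (-1) ^ (j - 1) * 2 ^ (as ! (j - 1)))"
  unfolding abr_value_def by (intro sum.cong) auto

lemma abr_value_drop:
  assumes "k \<le> length as"
  shows "(-1) ^ k * (abr_value as - abr_value (take k as)) = abr_value (drop k as)"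
proof -
  have "abr_value as = abr_value (take k as) + (-1) ^ k * abr_value (drop k as)"
    using abr_value_append[of "take k as" "drop k as"] assms by simp
  then show ?thesis
    by (simp flip: mult.assoc power_add)
qed

lemma abr_exponents_Nil [simp]: "\<not> abr_exponents []"
  by (simp add: abr_exponents_def)

lemma abr_exponents_Cons_ConsD:
  assumes "abr_exponents (a # b # rest)"
  shows "abr_exponents (b # rest)" and "b < a" and "rest = [] \<Longrightarrow> b + 1 < a"
proof -
  let ?as = "a # b # rest"
  have chain: "\<And>i. 1 \<le> i \<Longrightarrow> i + 1 < length ?as \<Longrightarrow> ?as ! i < ?as ! (i - 1)"
    and gap: "?as ! (length ?as - 1) + 1 < ?as ! (length ?as - 2)"
    using assms unfolding abr_exponents_def by auto
  show "abr_exponents (b # rest)"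
    unfolding abr_exponents_def
  proof (intro conjI allI impI)
    fix i assume "1 \<le> i \<and> i + 1 < length (b # rest)"
    then show "(b # rest) ! i < (b # rest) ! (i - 1)"
      using chain[of "Suc i"] by (cases i) auto
  next
    assume "2 \<le> length (b # rest)"
    then show "(b # rest) ! (length (b # rest) - 1) + 1 < (b # rest) ! (length (b # rest) - 2)"
      using gap by (cases rest) auto
  qed simp
  show "rest = [] \<Longrightarrow> b + 1 < a"
    using gap by simp
  then show "b < a"
    using chain[of 1] by (cases rest) auto
qed

lemma abr_exponents_drop:
  "abr_exponents as \<Longrightarrow> k < length as \<Longrightarrow> abr_exponents (drop k as)"
proof (induction k arbitrary: as)
  case (Suc k)
  then obtain a b rest where "as = a # b # rest"
    by (cases as; cases "tl as") auto
  with Suc show ?case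
    using abr_exponents_Cons_ConsD(1) by simp
qed simp

lemma abr_value_bounds:
  "abr_exponents as \<Longrightarrow> 2 ^ hd as < 2 * abr_value as \<and> abr_value as \<le> 2 ^ hd as
     \<and> (length as \<ge> 2 \<longrightarrow> abr_value as < 2 ^ hd as)"
proof (induction as rule: induct_list012)
  case 1
  then show ?case by (simp add: abr_exponents_def)
next
  case (2 a)
  then show ?case by simp
next
  case (3 a b rest)
  note tail = abr_exponents_Cons_ConsD[OF "3.prems"]
  from "3.IH"(2)[OF tail(1)] have ih:
    "2 ^ b < 2 * abr_value (b # rest)" "abr_value (b # rest) \<le> 2 ^ b"
    "rest \<noteq> [] \<Longrightarrow> abr_value (b # rest) < 2 ^ b"
    by (auto simp: neq_Nil_conv)
  have "2 * abr_value (b # rest) < 2 ^ a"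
  proof (cases "b + 2 \<le> a")
    case True
    then have "(2::int) ^ (b + 2) \<le> 2 ^ a"
      by (intro power_increasing) auto
    moreover have "(2::int) ^ (b + 2) = 4 * 2 ^ b" and "(0::int) < 2 ^ b"
      by simp_all
    ultimately show ?thesis
      using ih(2) by linarith
  next
    case False
    then have "a = b + 1" and "rest \<noteq> []"
      using tail(2,3) by auto
    then show ?thesis
      using ih(3) by simp
  qed
  moreover have "abr_value (b # rest) > 0"
    using ih(1) by (smt (verit) zero_less_power)
  ultimately show ?case by simp
qed

lemma ceiling_log2_eq:
  fixes x :: real
  assumes "2 ^ a < 2 * x" and "x \<le> 2 ^ a"
  shows "\<lceil>log 2 x\<rceil> = int a"
proof -
  have "x > 0"
    using assms(1) by (smt (verit) zero_less_power)
  have "log 2 x \<le> a"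
    using assms(2) \<open>x > 0\<close> by (simp add: log_le_iff powr_realpow)
  moreover have "log 2 (2 ^ a) < log 2 (2 * x)"
    using assms(1) by (intro log_less) auto
  then have "real a - 1 < log 2 x"
    using \<open>x > 0\<close> by (simp add: log_mult log_nat_power)
  ultimately show ?thesis
    by (intro ceiling_unique) auto
qed

lemma ceiling_log2_abr_value:
  assumes "abr_exponents as"
  shows "\<lceil>log 2 (real_of_int (abr_value as))\<rceil> = int (hd as)"
proof (rule ceiling_log2_eq)
  have "2 ^ hd as < 2 * abr_value as" and "abr_value as \<le> 2 ^ hd as"
    using abr_value_bounds[OF assms] by auto
  then show "2 ^ hd as < 2 * real_of_int (abr_value as)"
    and "real_of_int (abr_value as) \<le> 2 ^ hd as"
    by (metis of_int_less_iff of_int_le_iff of_int_mult of_int_numeral of_int_power)+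
qed

lemma abr_value_inj:
  "abr_exponents as \<Longrightarrow> abr_exponents bs \<Longrightarrow> abr_value as = abr_value bs \<Longrightarrow> as = bs"
proof (induction as arbitrary: bs)
  case Nil
  then show ?case by simp
next
  case (Cons a as)
  obtain b bs' where bs: "bs = b # bs'"
    using Cons.prems(2) by (cases bs) auto
  have "int (hd (a # as)) = int (hd bs)"
    using ceiling_log2_abr_value Cons.prems by metis
  then have "a = b"
    using bs by simp
  show ?case
  proof (cases "as = [] \<or> bs' = []")
    case True
    have "length (a # as) \<ge> 2 \<Longrightarrow> abr_value (a # as) < 2 ^ a"
      and "length bs \<ge> 2 \<Longrightarrow> abr_value bs < 2 ^ b"
      using abr_value_bounds[OF Cons.prems(1)] abr_value_bounds[OF Cons.prems(2)] bs by auto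
    with True Cons.prems(3) \<open>a = b\<close> bs show ?thesis
      by (cases as; cases bs') auto
  next
    case False
    then obtain c r d s where "as = c # r" and "bs' = d # s"
      by (auto simp: neq_Nil_conv)
    then have "abr_exponents as" and "abr_exponents bs'"
      using abr_exponents_Cons_ConsD(1) Cons.prems(1,2) bs by blast+
    moreover have "abr_value as = abr_value bs'"
      using Cons.prems(3) bs \<open>a = b\<close> by simp
    ultimately show ?thesis
      using Cons.IH bs \<open>a = b\<close> by simp
  qed
qed

lemma ceiling_log2_abr_remainder:
  assumes "abr_exponents as" and "k < length as"
  shows "\<lceil>log 2 (real_of_int ((-1) ^ k *
      (abr_value as - (\<Sum>j\<in>{1..k}. (-1) ^ (j - 1) * 2 ^ (as ! (j - 1))))))\<rceil> = int (as ! k)"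
proof -
  have "(-1) ^ k * (abr_value as - (\<Sum>j\<in>{1..k}. (-1) ^ (j - 1) * 2 ^ (as ! (j - 1))))
      = abr_value (drop k as)"
    using abr_value_drop[of k as] abr_value_take[of k as] assms(2) by simp
  then show ?thesis
    using ceiling_log2_abr_value[OF abr_exponents_drop[OF assms]] assms(2)
    by (simp add: hd_drop_conv_nth)
qed

lemma determines_abr_tl:
  assumes "determines_abr (a # as) n" and "as \<noteq> []"
  shows "determines_abr as (2 ^ a - n)"
proof -
  have adm: "abr_exponents (a # as)" and val: "int n = 2 ^ a - abr_value as"
    using assms(1) by (auto simp: determines_abr_def)
  have "int n \<le> 2 ^ a"
    using abr_value_bounds[OF adm] val by simp
  then have "n \<le> 2 ^ a"
    by (metis of_nat_le_iff of_nat_numeral of_nat_power)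
  then have "int (2 ^ a - n) = abr_value as"
    using val by (simp add: of_nat_diff)
  moreover have "abr_exponents as"
    using adm assms(2) abr_exponents_Cons_ConsD(1) by (cases as) auto
  ultimately show ?thesis
    by (simp add: determines_abr_def)
qed

theorem lemma19:
  fixes n :: nat and as :: "nat list"
  assumes "determines_abr as n"
  shows "int (as ! 0) = \<lceil>log 2 (real n)\<rceil>
    \<and> (\<forall>i\<in>{2..length as}.
          int (as ! (i - 1)) =
            \<lceil>log 2 (real_of_int ((-1) ^ (i - 1) *
               (int n - (\<Sum>j\<in>{1..i - 1}. (-1) ^ (j - 1) * 2 ^ (as ! (j - 1))))))\<rceil>)
    \<and> (\<forall>bs. determines_abr bs n \<longrightarrow> bs = as)
    \<and> (length as \<ge> 2 \<longrightarrow> determines_abr (tl as) (2 ^ (as ! 0) - n))"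
proof -
  have adm: "abr_exponents as" and val: "int n = abr_value as"
    using assms by (auto simp: determines_abr_def)
  then obtain a as' where as: "as = a # as'"
    by (cases as) auto
  have "real n = real_of_int (abr_value as)"
    using val by (metis of_int_of_nat_eq)
  then have "int (as ! 0) = \<lceil>log 2 (real n)\<rceil>"
    using ceiling_log2_abr_remainder[OF adm, of 0] as by simp
  moreover have "\<forall>bs. determines_abr bs n \<longrightarrow> bs = as"
    using abr_value_inj adm val by (auto simp: determines_abr_def)
  moreover have "length as \<ge> 2 \<longrightarrow> determines_abr (tl as) (2 ^ (as ! 0) - n)"
    using determines_abr_tl assms as by (auto simp: Suc_le_length_iff)
  ultimately show ?thesis
    using ceiling_log2_abr_remainder[OF adm] val by auto
qed

end
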